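(* Let $T:\mathcal{H}(\mathbb{D})\to\mathcal{H}(\mathbb{D})$ be a linear transformation, let $X\subset\mathcal{H}(\mathbb{D})$ be a Banach space, and let $v$ be a radial weight. For $z\in\mathbb{D}$ define the linear maps $(K_z^H)_T, (K_{z,1}^{\mathcal{B}})_T: X\to\mathbb{C}$ by $(K_z^H)_T(f)=Tf(z)$ and $(K_{z,1}^{\mathcal{B}})_T(f)=(Tf)'(z)$, and let $(K_0^{\mathcal{B}})_T(f)=Tf(0)$. Then: (i) $T$ maps $X$ boundedly into $H_v$ if and only if $(K_z^H)_T\in X^*$ for every $z\in\mathbb{D}$ and $\sup_{z\in\mathbb{D}} v(z)\,\|(K_z^H)_T\|<\infty$. (ii) $T$ maps $X$ boundedly into $\mathcal{B}_v$ if and only if $(K_0^{\mathcal{B}})_T\in X^*$, $(K_{z,1}^{\mathcal{B}})_T\in X^*$ for every $z\in\mathbb{D}$, and $\sup_{z\in\mathbb{D}} v(z)\,\|(K_{z,1}^{\mathcal{B}})_T\|<\infty$.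
   Context: $\mathbb{D}$ is the open unit disk and $\mathcal{H}(\mathbb{D})$ the space of holomorphic functions on $\mathbb{D}$. A weight is a continuous function $v:\mathbb{D}\to(0,1]$; it is radial if $v(z)=v(|z|)$. $H_v=\{f\in\mathcal{H}(\mathbb{D}):\|f\|_{H_v}=\sup_{z\in\mathbb{D}}v(z)|f(z)|<\infty\}$ and $\mathcal{B}_v=\{f\in\mathcal{H}(\mathbb{D}):\sup_{z\in\mathbb{D}}v(z)|f'(z)|<\infty\}$, the latter a Banach space with norm $|f(0)|+\sup_{z}v(z)|f'(z)|$. $X^*$ denotes the (continuous) dual of $X$, and $\|\cdot\|$ of a functional is its dual norm. *)

theory Defs
  imports "HOL-Analysis.Analysis"
begin

text \<open>The unit disk and holomorphic functions on it. Functions are represented as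
  total maps complex \<Rightarrow> complex; only their values on the disk matter.\<close>

abbreviation disk :: "complex set" where "disk \<equiv> ball 0 1"

definition holD :: "(complex \<Rightarrow> complex) set" where
  "holD = {f. f holomorphic_on disk}"

definition weight :: "(complex \<Rightarrow> real) \<Rightarrow> bool" where
  "weight v \<longleftrightarrow> continuous_on disk v \<and> (\<forall>z\<in>disk. 0 < v z \<and> v z \<le> 1)"

definition radial_weight :: "(complex \<Rightarrow> real) \<Rightarrow> bool" where
  "radial_weight v \<longleftrightarrow> weight v \<and> (\<forall>z\<in>disk. v z = v (complex_of_real (norm z)))"

definition Hv :: "(complex \<Rightarrow> real) \<Rightarrow> (complex \<Rightarrow> complex) set" where
  "Hv v = {f. f holomorphic_on disk \<and> bdd_above ((\<lambda>z. v z * norm (f z)) ` disk)}"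

definition Hv_norm :: "(complex \<Rightarrow> real) \<Rightarrow> (complex \<Rightarrow> complex) \<Rightarrow> real" where
  "Hv_norm v f = (SUP z\<in>disk. v z * norm (f z))"

definition Bv :: "(complex \<Rightarrow> real) \<Rightarrow> (complex \<Rightarrow> complex) set" where
  "Bv v = {f. f holomorphic_on disk \<and> bdd_above ((\<lambda>z. v z * norm (deriv f z)) ` disk)}"

definition Bv_norm :: "(complex \<Rightarrow> real) \<Rightarrow> (complex \<Rightarrow> complex) \<Rightarrow> real" where
  "Bv_norm v f = norm (f 0) + (SUP z\<in>disk. v z * norm (deriv f z))"

text \<open>A Banach space X \<subseteq> H(D) with norm N: a complex linear subspace of H(D), N a norm
  on it (functions agreeing on the disk are identified), and X complete w.r.t. N.\<close>

definition banach_subspace ::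
  "(complex \<Rightarrow> complex) set \<Rightarrow> ((complex \<Rightarrow> complex) \<Rightarrow> real) \<Rightarrow> bool" where
  "banach_subspace X N \<longleftrightarrow>
     X \<subseteq> holD \<and> (\<lambda>_. 0) \<in> X \<and>
     (\<forall>f\<in>X. \<forall>g\<in>X. (\<lambda>z. f z + g z) \<in> X) \<and>
     (\<forall>c. \<forall>f\<in>X. (\<lambda>z. c * f z) \<in> X) \<and>
     (\<forall>f\<in>X. 0 \<le> N f) \<and>
     (\<forall>f\<in>X. N f = 0 \<longleftrightarrow> (\<forall>z\<in>disk. f z = 0)) \<and>
     (\<forall>f\<in>X. \<forall>g\<in>X. N (\<lambda>z. f z + g z) \<le> N f + N g) \<and>
     (\<forall>c. \<forall>f\<in>X. N (\<lambda>z. c * f z) = norm c * N f) \<and>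
     (\<forall>s. (\<forall>n. s n \<in> X) \<longrightarrow>
          (\<forall>e>0. \<exists>M. \<forall>m\<ge>M. \<forall>n\<ge>M. N (\<lambda>z. s m z - s n z) < e) \<longrightarrow>
          (\<exists>f\<in>X. (\<lambda>n. N (\<lambda>z. s n z - f z)) \<longlonglongrightarrow> 0))"

text \<open>A linear transformation of H(D) (well defined on H(D), i.e. depending only
  on values on the disk, and with values in H(D)).\<close>

definition linear_HD :: "((complex \<Rightarrow> complex) \<Rightarrow> (complex \<Rightarrow> complex)) \<Rightarrow> bool" where
  "linear_HD T \<longleftrightarrow>
     (\<forall>f\<in>holD. T f \<in> holD) \<and>
     (\<forall>f\<in>holD. \<forall>g\<in>holD. (\<forall>z\<in>disk. f z = g z) \<longrightarrow> (\<forall>z\<in>disk. T f z = T g z)) \<and>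
     (\<forall>f\<in>holD. \<forall>g\<in>holD. \<forall>z\<in>disk. T (\<lambda>w. f w + g w) z = T f z + T g z) \<and>
     (\<forall>c. \<forall>f\<in>holD. \<forall>z\<in>disk. T (\<lambda>w. c * f w) z = c * T f z)"

definition in_dual ::
  "(complex \<Rightarrow> complex) set \<Rightarrow> ((complex \<Rightarrow> complex) \<Rightarrow> real) \<Rightarrow>
   ((complex \<Rightarrow> complex) \<Rightarrow> complex) \<Rightarrow> bool" where
  "in_dual X N \<phi> \<longleftrightarrow>
     (\<forall>f\<in>X. \<forall>g\<in>X. \<phi> (\<lambda>z. f z + g z) = \<phi> f + \<phi> g) \<and>
     (\<forall>c. \<forall>f\<in>X. \<phi> (\<lambda>z. c * f z) = c * \<phi> f) \<and>
     (\<exists>C. \<forall>f\<in>X. norm (\<phi> f) \<le> C * N f)"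

definition dual_norm ::
  "(complex \<Rightarrow> complex) set \<Rightarrow> ((complex \<Rightarrow> complex) \<Rightarrow> real) \<Rightarrow>
   ((complex \<Rightarrow> complex) \<Rightarrow> complex) \<Rightarrow> real" where
  "dual_norm X N \<phi> = (SUP f\<in>{f\<in>X. N f \<le> 1}. norm (\<phi> f))"

definition maps_boundedly ::
  "((complex \<Rightarrow> complex) \<Rightarrow> (complex \<Rightarrow> complex)) \<Rightarrow>
   (complex \<Rightarrow> complex) set \<Rightarrow> ((complex \<Rightarrow> complex) \<Rightarrow> real) \<Rightarrow>
   (complex \<Rightarrow> complex) set \<Rightarrow> ((complex \<Rightarrow> complex) \<Rightarrow> real) \<Rightarrow> bool" where
  "maps_boundedly T X N Y NY \<longleftrightarrow>
     (\<forall>f\<in>X. T f \<in> Y) \<and> (\<exists>C. \<forall>f\<in>X. NY (T f) \<le> C * N f)"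

end

theory Submission
  imports Defs
begin

text \<open>Both statements are the same fact about a family of functionals \<open>\<phi>\<^sub>z\<close> on \<open>X\<close>:
  the norm of \<open>Tf\<close> in \<open>H\<^sub>v\<close> (resp. the seminorm part of \<open>B\<^sub>v\<close>) is \<open>sup\<^sub>z v(z) |\<phi>\<^sub>z f|\<close>
  with \<open>\<phi>\<^sub>z f = Tf(z)\<close> (resp. \<open>(Tf)'(z)\<close>), so \<open>T\<close> is bounded iff
  \<open>v(z) |\<phi>\<^sub>z f| \<le> C \<parallel>f\<parallel>\<close> uniformly in \<open>z\<close>.  Since \<open>v > 0\<close>, this says exactly that each \<open>\<phi>\<^sub>z\<close> is
  bounded with \<open>v(z) \<parallel>\<phi>\<^sub>z\<parallel> \<le> C\<close>.\<close>

definition linear_functional_on ::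
  "(complex \<Rightarrow> complex) set \<Rightarrow> ((complex \<Rightarrow> complex) \<Rightarrow> complex) \<Rightarrow> bool" where
  "linear_functional_on X \<phi> \<longleftrightarrow>
     (\<forall>f\<in>X. \<forall>g\<in>X. \<phi> (\<lambda>z. f z + g z) = \<phi> f + \<phi> g) \<and>
     (\<forall>c. \<forall>f\<in>X. \<phi> (\<lambda>z. c * f z) = c * \<phi> f)"

lemma in_dual_iff:
  "in_dual X N \<phi> \<longleftrightarrow> linear_functional_on X \<phi> \<and> (\<exists>C. \<forall>f\<in>X. norm (\<phi> f) \<le> C * N f)"
  unfolding in_dual_def linear_functional_on_def by blast

lemma banach_subspace_nonneg: "banach_subspace X N \<Longrightarrow> f \<in> X \<Longrightarrow> 0 \<le> N f"
  unfolding banach_subspace_def by blast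

lemma banach_subspace_scale_norm:
  "banach_subspace X N \<Longrightarrow> f \<in> X \<Longrightarrow> (\<lambda>z. c * f z) \<in> X \<and> N (\<lambda>z. c * f z) = norm c * N f"
  unfolding banach_subspace_def by blast

lemma bdd_above_dual_ball:
  assumes bs: "banach_subspace X N" and C: "\<forall>f\<in>X. norm (\<phi> f) \<le> C * N f"
  shows "bdd_above ((\<lambda>f. norm (\<phi> f)) ` {f\<in>X. N f \<le> 1})"
proof (rule bdd_aboveI2)
  fix g assume g: "g \<in> {f\<in>X. N f \<le> 1}"
  then have "0 \<le> N g" "N g \<le> 1" using banach_subspace_nonneg[OF bs] by auto
  have "norm (\<phi> g) \<le> C * N g" using C g by blast
  also have "\<dots> \<le> \<bar>C\<bar> * N g" using \<open>0 \<le> N g\<close> by (simp add: mult_right_mono)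
  also have "\<dots> \<le> \<bar>C\<bar>" using \<open>0 \<le> N g\<close> \<open>N g \<le> 1\<close> by (simp add: mult_left_le)
  finally show "norm (\<phi> g) \<le> \<bar>C\<bar>" .
qed

lemma dual_norm_bound:
  assumes bs: "banach_subspace X N" and \<phi>: "in_dual X N \<phi>" and f: "f \<in> X"
  shows "norm (\<phi> f) \<le> dual_norm X N \<phi> * N f"
proof -
  obtain C where C: "\<forall>f\<in>X. norm (\<phi> f) \<le> C * N f" using \<phi> unfolding in_dual_def by blast
  show ?thesis
  proof (cases "N f = 0")
    case True
    then show ?thesis using C f by (metis mult_zero_right)
  next
    case False
    then have pos: "0 < N f" using banach_subspace_nonneg[OF bs f] by simp
    define c where "c = complex_of_real (1 / N f)"
    have nc: "norm c = 1 / N f" unfolding c_def norm_of_real using pos by simp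
    have cf: "(\<lambda>z. c * f z) \<in> X" "N (\<lambda>z. c * f z) = 1"
      using banach_subspace_scale_norm[OF bs f, of c] nc pos by auto
    have "norm (\<phi> (\<lambda>z. c * f z)) \<le> dual_norm X N \<phi>" unfolding dual_norm_def
      by (rule cSUP_upper[OF _ bdd_above_dual_ball[OF bs C]]) (use cf in auto)
    moreover have "\<phi> (\<lambda>z. c * f z) = c * \<phi> f" using \<phi> f unfolding in_dual_def by blast
    ultimately show ?thesis using pos nc by (simp add: norm_mult field_simps)
  qed
qed

lemma dual_norm_le:
  assumes bs: "banach_subspace X N" and K: "\<And>f. f \<in> X \<Longrightarrow> norm (\<phi> f) \<le> K * N f"
    and K0: "0 \<le> K"
  shows "dual_norm X N \<phi> \<le> K"
  unfolding dual_norm_def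
proof (rule cSUP_least)
  have "(\<lambda>_. 0) \<in> X" "N (\<lambda>_. 0) = 0" using bs unfolding banach_subspace_def by auto
  then show "{f \<in> X. N f \<le> 1} \<noteq> {}" by auto
next
  fix f assume "f \<in> {f \<in> X. N f \<le> 1}"
  then show "norm (\<phi> f) \<le> K" using K[of f] K0 banach_subspace_nonneg[OF bs, of f]
    by (metis mem_Collect_eq mult_left_le order_trans)
qed

lemma weighted_bound_iff_dual_bound:
  assumes bs: "banach_subspace X N"
    and lin: "\<And>z. z \<in> S \<Longrightarrow> linear_functional_on X (\<phi> z)"
    and pos: "\<And>z. z \<in> S \<Longrightarrow> 0 < v z"
  shows "(\<exists>C. \<forall>f\<in>X. \<forall>z\<in>S. v z * norm (\<phi> z f) \<le> C * N f) \<longleftrightarrow>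
         (\<forall>z\<in>S. in_dual X N (\<phi> z)) \<and> bdd_above ((\<lambda>z. v z * dual_norm X N (\<phi> z)) ` S)"
proof
  assume "\<exists>C. \<forall>f\<in>X. \<forall>z\<in>S. v z * norm (\<phi> z f) \<le> C * N f"
  then obtain C where C: "\<forall>f\<in>X. \<forall>z\<in>S. v z * norm (\<phi> z f) \<le> C * N f" by blast
  define K where "K = max C 0"
  have bound: "norm (\<phi> z f) \<le> K / v z * N f" if f: "f \<in> X" and z: "z \<in> S" for f z
  proof -
    have "v z * norm (\<phi> z f) \<le> K * N f"
      using C f z banach_subspace_nonneg[OF bs f] unfolding K_def
      by (meson max.cobounded1 mult_right_mono order_trans)
    then show ?thesis using pos[OF z] by (simp add: field_simps)
  qed
  have "in_dual X N (\<phi> z)" if "z \<in> S" for z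
    using lin bound that unfolding in_dual_iff by blast
  moreover have "v z * dual_norm X N (\<phi> z) \<le> K" if z: "z \<in> S" for z
  proof -
    have "dual_norm X N (\<phi> z) \<le> K / v z"
      by (rule dual_norm_le[OF bs]) (use bound z pos[OF z] K_def in auto)
    then show ?thesis using pos[OF z] by (simp add: field_simps)
  qed
  ultimately show "(\<forall>z\<in>S. in_dual X N (\<phi> z)) \<and> bdd_above ((\<lambda>z. v z * dual_norm X N (\<phi> z)) ` S)"
    by (auto intro!: bdd_aboveI2[where M = K])
next
  assume A: "(\<forall>z\<in>S. in_dual X N (\<phi> z)) \<and> bdd_above ((\<lambda>z. v z * dual_norm X N (\<phi> z)) ` S)"
  then obtain B where B: "\<And>z. z \<in> S \<Longrightarrow> v z * dual_norm X N (\<phi> z) \<le> B"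
    unfolding bdd_above_def by fastforce
  have "v z * norm (\<phi> z f) \<le> B * N f" if f: "f \<in> X" and z: "z \<in> S" for f z
  proof -
    have "v z * norm (\<phi> z f) \<le> v z * (dual_norm X N (\<phi> z) * N f)"
      using dual_norm_bound[OF bs _ f] A z pos[OF z] by auto
    also have "\<dots> \<le> B * N f" using B[OF z] banach_subspace_nonneg[OF bs f]
      by (simp add: mult.assoc[symmetric] mult_right_mono)
    finally show ?thesis .
  qed
  then show "\<exists>C. \<forall>f\<in>X. \<forall>z\<in>S. v z * norm (\<phi> z f) \<le> C * N f" by blast
qed

lemma linear_functional_on_eval:
  assumes T: "linear_HD T" and X: "X \<subseteq> holD" and z: "z \<in> disk"
  shows "linear_functional_on X (\<lambda>f. T f z)"
proof -
  have "\<forall>f\<in>holD. \<forall>g\<in>holD. T (\<lambda>w. f w + g w) z = T f z + T g z"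
    and "\<forall>c. \<forall>f\<in>holD. T (\<lambda>w. c * f w) z = c * T f z"
    using T z unfolding linear_HD_def by blast+
  then show ?thesis using X unfolding linear_functional_on_def by blast
qed

lemma deriv_linear_HD:
  assumes T: "linear_HD T" and f: "f \<in> holD" and g: "g \<in> holD" and z: "z \<in> disk"
  shows "deriv (T (\<lambda>w. f w + g w)) z = deriv (T f) z + deriv (T g) z"
    and "deriv (T (\<lambda>w. c * f w)) z = c * deriv (T f) z"
proof -
  have near_z: "eventually (\<lambda>w. w \<in> disk) (nhds z)"
    using z by (intro eventually_nhds_in_open) auto
  have "\<forall>w\<in>disk. T (\<lambda>w. f w + g w) w = T f w + T g w"
    and "\<forall>w\<in>disk. T (\<lambda>w. c * f w) w = c * T f w"
    using T f g unfolding linear_HD_def by blast+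
  then have add: "eventually (\<lambda>w. T (\<lambda>w. f w + g w) w = T f w + T g w) (nhds z)"
    and mul: "eventually (\<lambda>w. T (\<lambda>w. c * f w) w = c * T f w) (nhds z)"
    using near_z by (auto elim: eventually_mono)
  have "T f holomorphic_on disk" "T g holomorphic_on disk"
    using T f g unfolding linear_HD_def holD_def by auto
  then have df: "T f field_differentiable at z" "T g field_differentiable at z"
    using z holomorphic_on_imp_differentiable_at by auto
  show "deriv (T (\<lambda>w. f w + g w)) z = deriv (T f) z + deriv (T g) z"
    using deriv_cong_ev[OF add refl] df by simp
  show "deriv (T (\<lambda>w. c * f w)) z = c * deriv (T f) z"
    using deriv_cong_ev[OF mul refl] df by simp
qed

lemma linear_functional_on_deriv:
  assumes T: "linear_HD T" and X: "X \<subseteq> holD" and z: "z \<in> disk"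
  shows "linear_functional_on X (\<lambda>f. deriv (T f) z)"
  using deriv_linear_HD[OF T _ _ z] subsetD[OF X] unfolding linear_functional_on_def by blast

lemma disk_nonempty: "disk \<noteq> {}"
  using centre_in_ball[of 0 1] by auto

lemma maps_boundedly_Hv_iff:
  assumes hol: "\<And>f. f \<in> X \<Longrightarrow> T f holomorphic_on disk"
  shows "maps_boundedly T X N (Hv v) (Hv_norm v) \<longleftrightarrow>
         (\<exists>C. \<forall>f\<in>X. \<forall>z\<in>disk. v z * norm (T f z) \<le> C * N f)"
proof
  assume "maps_boundedly T X N (Hv v) (Hv_norm v)"
  then obtain C where inH: "\<forall>f\<in>X. T f \<in> Hv v" and C: "\<forall>f\<in>X. Hv_norm v (T f) \<le> C * N f"
    unfolding maps_boundedly_def by blast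
  have "v z * norm (T f z) \<le> C * N f" if f: "f \<in> X" and z: "z \<in> disk" for f z
  proof -
    have "v z * norm (T f z) \<le> Hv_norm v (T f)" unfolding Hv_norm_def
      by (rule cSUP_upper) (use inH f z in \<open>auto simp: Hv_def\<close>)
    then show ?thesis using C f by fastforce
  qed
  then show "\<exists>C. \<forall>f\<in>X. \<forall>z\<in>disk. v z * norm (T f z) \<le> C * N f" by blast
next
  assume "\<exists>C. \<forall>f\<in>X. \<forall>z\<in>disk. v z * norm (T f z) \<le> C * N f"
  then obtain C where C: "\<forall>f\<in>X. \<forall>z\<in>disk. v z * norm (T f z) \<le> C * N f" by blast
  have "T f \<in> Hv v \<and> Hv_norm v (T f) \<le> C * N f" if f: "f \<in> X" for f
    unfolding Hv_def Hv_norm_def using hol[OF f] C f disk_nonempty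
    by (auto intro!: bdd_aboveI2 cSUP_least)
  then show "maps_boundedly T X N (Hv v) (Hv_norm v)"
    unfolding maps_boundedly_def by blast
qed

lemma maps_boundedly_Bv_iff:
  assumes hol: "\<And>f. f \<in> X \<Longrightarrow> T f holomorphic_on disk"
    and v: "\<And>z. z \<in> disk \<Longrightarrow> 0 \<le> v z"
  shows "maps_boundedly T X N (Bv v) (Bv_norm v) \<longleftrightarrow>
         (\<exists>C. \<forall>f\<in>X. norm (T f 0) \<le> C * N f) \<and>
         (\<exists>C. \<forall>f\<in>X. \<forall>z\<in>disk. v z * norm (deriv (T f) z) \<le> C * N f)"
proof
  assume "maps_boundedly T X N (Bv v) (Bv_norm v)"
  then obtain C where inB: "\<forall>f\<in>X. T f \<in> Bv v" and C: "\<forall>f\<in>X. Bv_norm v (T f) \<le> C * N f"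
    unfolding maps_boundedly_def by blast
  have sup_upper: "v z * norm (deriv (T f) z) \<le> (SUP z\<in>disk. v z * norm (deriv (T f) z))"
    if f: "f \<in> X" and z: "z \<in> disk" for f z
    by (rule cSUP_upper) (use inB f z in \<open>auto simp: Bv_def\<close>)
  have sup_nonneg: "0 \<le> (SUP z\<in>disk. v z * norm (deriv (T f) z))" if f: "f \<in> X" for f
    using sup_upper[OF f, of 0] v[of 0] by (meson centre_in_ball mult_nonneg_nonneg norm_ge_zero
        order_trans zero_less_one)
  have "norm (T f 0) \<le> C * N f" if f: "f \<in> X" for f
    using sup_nonneg[OF f] C f unfolding Bv_norm_def by fastforce
  moreover have "v z * norm (deriv (T f) z) \<le> C * N f" if f: "f \<in> X" and z: "z \<in> disk" for f z
  proof -
    have "v z * norm (deriv (T f) z) \<le> Bv_norm v (T f)"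
      using sup_upper[OF f z] norm_ge_zero[of "T f 0"] unfolding Bv_norm_def by linarith
    then show ?thesis using C f by fastforce
  qed
  ultimately show "(\<exists>C. \<forall>f\<in>X. norm (T f 0) \<le> C * N f) \<and>
         (\<exists>C. \<forall>f\<in>X. \<forall>z\<in>disk. v z * norm (deriv (T f) z) \<le> C * N f)" by blast
next
  assume "(\<exists>C. \<forall>f\<in>X. norm (T f 0) \<le> C * N f) \<and>
         (\<exists>C. \<forall>f\<in>X. \<forall>z\<in>disk. v z * norm (deriv (T f) z) \<le> C * N f)"
  then obtain C0 C where C0: "\<forall>f\<in>X. norm (T f 0) \<le> C0 * N f"
    and C: "\<forall>f\<in>X. \<forall>z\<in>disk. v z * norm (deriv (T f) z) \<le> C * N f" by blast
  have "T f \<in> Bv v \<and> Bv_norm v (T f) \<le> (C0 + C) * N f" if f: "f \<in> X" for f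
  proof
    show "T f \<in> Bv v" unfolding Bv_def using hol[OF f] C f by (auto intro!: bdd_aboveI2)
    have "(SUP z\<in>disk. v z * norm (deriv (T f) z)) \<le> C * N f"
      using C f disk_nonempty by (auto intro!: cSUP_least)
    then show "Bv_norm v (T f) \<le> (C0 + C) * N f"
      unfolding Bv_norm_def using C0 f by (simp add: distrib_right add_mono)
  qed
  then show "maps_boundedly T X N (Bv v) (Bv_norm v)"
    unfolding maps_boundedly_def by blast
qed

theorem theorem2p1:
  fixes T :: "(complex \<Rightarrow> complex) \<Rightarrow> (complex \<Rightarrow> complex)"
    and X :: "(complex \<Rightarrow> complex) set"
    and N :: "(complex \<Rightarrow> complex) \<Rightarrow> real"
    and v :: "complex \<Rightarrow> real"
  assumes "linear_HD T"
    and "banach_subspace X N"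
    and "radial_weight v"
  shows "(maps_boundedly T X N (Hv v) (Hv_norm v) \<longleftrightarrow>
           (\<forall>z\<in>disk. in_dual X N (\<lambda>f. T f z)) \<and>
           bdd_above ((\<lambda>z. v z * dual_norm X N (\<lambda>f. T f z)) ` disk)) \<and>
         (maps_boundedly T X N (Bv v) (Bv_norm v) \<longleftrightarrow>
           in_dual X N (\<lambda>f. T f 0) \<and>
           (\<forall>z\<in>disk. in_dual X N (\<lambda>f. deriv (T f) z)) \<and>
           bdd_above ((\<lambda>z. v z * dual_norm X N (\<lambda>f. deriv (T f) z)) ` disk))"
proof -
  have X: "X \<subseteq> holD" using assms(2) unfolding banach_subspace_def by blast
  have hol: "\<And>f. f \<in> X \<Longrightarrow> T f holomorphic_on disk"
    using assms(1) X unfolding linear_HD_def holD_def by auto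
  have pos: "\<And>z. z \<in> disk \<Longrightarrow> 0 < v z"
    using assms(3) unfolding radial_weight_def weight_def by blast
  have eval0: "in_dual X N (\<lambda>f. T f 0) \<longleftrightarrow> (\<exists>C. \<forall>f\<in>X. norm (T f 0) \<le> C * N f)"
    using linear_functional_on_eval[OF assms(1) X, of 0] in_dual_iff by auto
  show ?thesis
    by (simp only: maps_boundedly_Hv_iff[OF hol] maps_boundedly_Bv_iff[OF hol less_imp_le[OF pos]]
        eval0 weighted_bound_iff_dual_bound[OF assms(2) linear_functional_on_eval[OF assms(1) X] pos]
        weighted_bound_iff_dual_bound[OF assms(2) linear_functional_on_deriv[OF assms(1) X] pos])
qed

end
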